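(* In the motivic Steenrod algebra (over an algebraically closed field of characteristic 0), let $P^RP^S=\sum_X\tau^{u(X)}b(X)P^{T(X)}$ be the Milnor product formula. If for a Milnor matrix $X$ one has $b(X)=1$ and $v(T(X))=v(R)+v(S)$, then $u(X)=0$.
   Context: $\mathbb{M}_2=\mathbb{F}_2[\tau]$, $\tau$ of bidegree $(0,1)$. The Milnor basis of the motivic Steenrod algebra $A$ over $\mathbb{M}_2$ consists of $P^R$ for finite sequences $R=(r_1,r_2,\dots)$ of nonnegative integers, with $P^R$ of bidegree $\big(\sum r_i(2^i-1),\sum\lfloor r_i(2^i-1)/2\rfloor\big)$. The Milnor product formula: $X=(x_{ij})_{i,j\ge0}$ ranges over matrices of nonnegative integers ($x_{00}$ ignored) with $\sum_j2^jx_{ij}=r_i$ for $i\ge1$ and $\sum_ix_{ij}=s_j$ for $j\ge1$; $T(X)=(t_1,t_2,\dots)$ with $t_n=\sum_{i+j=n}x_{ij}$; $b(X)\in\mathbb{F}_2$ is the product over $n$ of the multinomial coefficients $t_n!/\prod_{i+j=n}x_{ij}!$ mod 2; and $u(X)\ge0$ is the integer forced by homogeneity, namely $u(X)=C(P^R)+C(P^S)-C(P^{T(X)})$, where the Chow weight of an element of bidegree $(p,q)$ is $C=2q-p$. For $R=(r_1,r_2,\dots)$ with 2-adic expansions $r_i=\sum_ka_{ik}2^k$, set $v(R)=\sum_{i,k}i\,a_{ik}$. *)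

theory Defs
  imports Main
begin

text \<open>Milnor sequences R = (r_1, r_2, ...) are represented as functions nat => nat;
  the value at index 0 is ignored everywhere. They are required to have finite support.\<close>

definition fin_seq :: "(nat \<Rightarrow> nat) \<Rightarrow> bool" where
  "fin_seq R \<longleftrightarrow> finite {i. 1 \<le> i \<and> R i \<noteq> 0}"

text \<open>First (topological) and second (weight) degree of P^R.\<close>
definition deg_p :: "(nat \<Rightarrow> nat) \<Rightarrow> nat" where
  "deg_p R = (\<Sum>i\<in>{i. 1 \<le> i \<and> R i \<noteq> 0}. R i * (2 ^ i - 1))"

definition deg_q :: "(nat \<Rightarrow> nat) \<Rightarrow> nat" where
  "deg_q R = (\<Sum>i\<in>{i. 1 \<le> i \<and> R i \<noteq> 0}. (R i * (2 ^ i - 1)) div 2)"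

definition chow :: "(nat \<Rightarrow> nat) \<Rightarrow> int" where
  "chow R = 2 * int (deg_q R) - int (deg_p R)"

text \<open>Milnor matrices X = (x_ij); the entry x_00 is ignored.\<close>
definition fin_matrix :: "(nat \<Rightarrow> nat \<Rightarrow> nat) \<Rightarrow> bool" where
  "fin_matrix X \<longleftrightarrow> finite {(i, j). (i, j) \<noteq> (0, 0) \<and> X i j \<noteq> 0}"

definition milnor_matrix :: "(nat \<Rightarrow> nat) \<Rightarrow> (nat \<Rightarrow> nat) \<Rightarrow> (nat \<Rightarrow> nat \<Rightarrow> nat) \<Rightarrow> bool" where
  "milnor_matrix R S X \<longleftrightarrow> fin_matrix X
     \<and> (\<forall>i\<ge>1. (\<Sum>j\<in>{j. X i j \<noteq> 0}. 2 ^ j * X i j) = R i)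
     \<and> (\<forall>j\<ge>1. (\<Sum>i\<in>{i. X i j \<noteq> 0}. X i j) = S j)"

definition T_seq :: "(nat \<Rightarrow> nat \<Rightarrow> nat) \<Rightarrow> nat \<Rightarrow> nat" where
  "T_seq X n = (if n = 0 then 0 else (\<Sum>i\<le>n. X i (n - i)))"

text \<open>b(X): product over n of the multinomial coefficients t_n! / prod_{i+j=n} x_ij!, mod 2
  (factors with t_n = 0 are 1, so only the finitely many n with t_n nonzero are taken).\<close>
definition multinom_n :: "(nat \<Rightarrow> nat \<Rightarrow> nat) \<Rightarrow> nat \<Rightarrow> nat" where
  "multinom_n X n = fact (T_seq X n) div (\<Prod>i\<le>n. fact (X i (n - i)))"

definition b_coeff :: "(nat \<Rightarrow> nat \<Rightarrow> nat) \<Rightarrow> nat" where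
  "b_coeff X = (\<Prod>n\<in>{n. 1 \<le> n \<and> T_seq X n \<noteq> 0}. multinom_n X n) mod 2"

definition u_exp :: "(nat \<Rightarrow> nat) \<Rightarrow> (nat \<Rightarrow> nat) \<Rightarrow> (nat \<Rightarrow> nat \<Rightarrow> nat) \<Rightarrow> int" where
  "u_exp R S X = chow R + chow S - chow (T_seq X)"

text \<open>v(R) = sum_{i,k} i * a_ik where r_i = sum_k a_ik 2^k (bits a_ik; bits with k > r_i vanish).\<close>
definition v_val :: "(nat \<Rightarrow> nat) \<Rightarrow> nat" where
  "v_val R = (\<Sum>i\<in>{i. 1 \<le> i \<and> R i \<noteq> 0}. \<Sum>k\<le>R i. i * ((R i div 2 ^ k) mod 2))"

end

theory Submission
  imports Defs "HOL-Computational_Algebra.Primes"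
begin

(* Write popcount n for the binary digit sum of n, so v(R) = sum_i i * popcount r_i
   and C(P^R) = - #{i. r_i odd} (because 2^i - 1 is odd).  The argument:
   (1) digit sums are subadditive, and equality for a finite sum means "no carries",
       which forces the parity of the sum to be the sum of the parities;
   (2) by Legendre's formula for 2, an odd multinomial coefficient has no carries, so
       b(X) = 1 gives popcount t_n = sum_{i+j=n} popcount x_ij and hence
       v(T(X)) = sum_{ij} (i + j) popcount x_ij;
   (3) subadditivity bounds v(R) by sum_{ij} i popcount x_ij and v(S) by
       sum_{ij} j popcount x_ij; v(T) = v(R) + v(S) makes both bounds tight, so rows
       and columns have no carries either;
   (4) then r_i = x_i0, s_j = sum_i x_ij and t_n = sum_{i+j=n} x_ij mod 2, and counting
       odd entries of X in two ways gives C(P^T) = C(P^R) + C(P^S), i.e. u(X) = 0.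
   The file develops (1), (2), then sums over a finite box supporting X, then the
   locale milnor_box carrying out (2)-(4); the main theorem instantiates it. *)

fun popcount :: "nat \<Rightarrow> nat" where
  "popcount n = (if n = 0 then 0 else n mod 2 + popcount (n div 2))"

declare popcount.simps [simp del]

lemma popcount_rec: "popcount n = n mod 2 + popcount (n div 2)"
  by (cases "n = 0") (simp_all add: popcount.simps[of n] popcount.simps[of 0])

lemma popcount_0 [simp]: "popcount 0 = 0"
  by (simp add: popcount.simps)

lemma popcount_1 [simp]: "popcount 1 = 1"
  using popcount_rec[of 1] by simp

lemma popcount_double [simp]: "popcount (2 * n) = popcount n"
  by (simp add: popcount_rec[of "2 * n"])

lemma popcount_pow2_mult [simp]: "popcount (2 ^ j * n) = popcount n"
  by (induction j) (simp_all add: mult.assoc)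

lemma popcount_add_carry:
  "popcount (a + b) + of_bool (odd a \<and> odd b) \<le> popcount a + popcount b"
proof (induction "a + b" arbitrary: a b rule: less_induct)
  case less
  let ?c = "a div 2 + b div 2"
  show ?case
  proof (cases "odd a \<and> odd b")
    case True
    then have ab: "a + b = 2 * (?c + 1)" by (auto elim!: oddE)
    have "?c + 1 < a + b" by (subst ab) simp
    from less[OF this] have c1: "popcount (?c + 1) \<le> popcount ?c + 1"
      unfolding popcount_1 by linarith
    have "?c < a + b" by (subst ab) simp
    from less[OF this] have c2: "popcount ?c \<le> popcount (a div 2) + popcount (b div 2)"
      by simp
    have "popcount a = 1 + popcount (a div 2)" "popcount b = 1 + popcount (b div 2)"
      using True by (simp_all add: popcount_rec[of a] popcount_rec[of b] odd_iff_mod_2_eq_one)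
    then show ?thesis
      using True c1 c2 by (simp only: ab popcount_double) simp
  next
    case False
    then have "(a + b) mod 2 = a mod 2 + b mod 2" "(a + b) div 2 = ?c"
      by (auto elim!: evenE oddE)
    moreover have "popcount ?c \<le> popcount (a div 2) + popcount (b div 2)" if "a + b \<noteq> 0"
    proof -
      have "?c < a + b" using that by presburger
      from less[OF this] show ?thesis by simp
    qed
    ultimately show ?thesis
      using False popcount_rec[of "a + b"] popcount_rec[of a] popcount_rec[of b]
      by (cases "a + b = 0") auto
  qed
qed

lemma popcount_add: "popcount (a + b) \<le> popcount a + popcount b"
  using popcount_add_carry[of a b] by simp

lemma popcount_sum_le: "popcount (\<Sum>k\<in>A. f k) \<le> (\<Sum>k\<in>A. popcount (f k))"
proof (induction A rule: infinite_finite_induct)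
  case (insert a F)
  then show ?case using popcount_add[of "f a" "sum f F"] by simp
qed simp_all

(* If a finite sum has no carries at all (the digit sums add up), then at most one
   summand is odd, so the parity of the sum is the sum of the parities. *)
lemma no_carry_parity:
  assumes "finite A" and "popcount (\<Sum>k\<in>A. f k) = (\<Sum>k\<in>A. popcount (f k))"
  shows "(\<Sum>k\<in>A. f k) mod 2 = (\<Sum>k\<in>A. f k mod 2)"
  using assms
proof (induction A rule: finite_induct)
  case (insert a F)
  let ?s = "sum f F"
  have "popcount (f a + ?s) = popcount (f a) + (\<Sum>k\<in>F. popcount (f k))"
    using insert by simp
  moreover have "popcount (f a + ?s) + of_bool (odd (f a) \<and> odd ?s) \<le> popcount (f a) + popcount ?s"
    by (rule popcount_add_carry)
  moreover have "popcount ?s \<le> (\<Sum>k\<in>F. popcount (f k))"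
    by (rule popcount_sum_le)
  ultimately have "popcount ?s = (\<Sum>k\<in>F. popcount (f k))" and "\<not> (odd (f a) \<and> odd ?s)"
    by (cases "odd (f a) \<and> odd ?s"; simp)+
  then have "?s mod 2 = (\<Sum>k\<in>F. f k mod 2)" and "(f a + ?s) mod 2 = f a mod 2 + ?s mod 2"
    using insert by (auto elim!: evenE oddE)
  then show ?case using insert by simp
qed simp

lemma popcount_eq_bits_below: "m < 2 ^ N \<Longrightarrow> (\<Sum>k<N. m div 2 ^ k mod 2) = popcount m"
proof (induction N arbitrary: m)
  case (Suc N)
  have "(\<Sum>k<Suc N. m div 2 ^ k mod 2) = m mod 2 + (\<Sum>k<N. m div 2 div 2 ^ k mod 2)"
    by (simp add: sum.lessThan_Suc_shift div_mult2_eq del: sum.lessThan_Suc)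
  also have "(\<Sum>k<N. m div 2 div 2 ^ k mod 2) = popcount (m div 2)"
    using Suc by simp
  finally show ?case by (simp add: popcount_rec[of m])
qed simp

lemma popcount_eq_bits: "(\<Sum>k\<le>m. m div 2 ^ k mod 2) = popcount m"
  using popcount_eq_bits_below[of m "Suc m"] less_exp[of "Suc m"]
  by (simp add: lessThan_Suc_atMost)

lemma multiplicity_two_double:
  "n \<noteq> 0 \<Longrightarrow> multiplicity (2::nat) (2 * n) = Suc (multiplicity 2 n)"
  by (rule multiplicity_times_same) auto

(* Incrementing n clears its trailing ones: each cleared one is a factor 2 of n + 1. *)
lemma popcount_Suc_multiplicity:
  "popcount (Suc n) + multiplicity (2::nat) (Suc n) = Suc (popcount n)"
proof (induction n rule: less_induct)
  case (less n)
  show ?case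
  proof (cases "even n")
    case True
    then have "multiplicity (2::nat) (Suc n) = 0"
      by (intro not_dvd_imp_multiplicity_0) simp
    then show ?thesis
      using True by (auto simp add: popcount_rec[of "Suc n"] popcount_rec[of n] elim!: evenE)
  next
    case False
    then obtain m where n: "n = 2 * m + 1" by (auto elim!: oddE)
    have "popcount (Suc n) = popcount (Suc m)"
      using popcount_double[of "Suc m"] by (simp add: n)
    moreover have "popcount n = Suc (popcount m)"
      using popcount_rec[of "Suc (2 * m)"] by (simp add: n)
    moreover have "multiplicity (2::nat) (Suc n) = Suc (multiplicity 2 (Suc m))"
      using multiplicity_two_double[of "Suc m"] by (simp add: n)
    ultimately show ?thesis
      using less[of m] n by simp
  qed
qed

lemma legendre_two: "multiplicity (2::nat) (fact n) + popcount n = n"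
proof (induction n)
  case (Suc n)
  have "multiplicity (2::nat) (fact (Suc n))
      = multiplicity 2 (Suc n) + multiplicity 2 (fact n :: nat)"
    unfolding fact_Suc of_nat_id by (rule prime_elem_multiplicity_mult_distrib) auto
  then show ?case using Suc popcount_Suc_multiplicity[of n] by simp
qed simp

lemma prod_fact_dvd_fact_sum:
  assumes "finite A"
  shows "(\<Prod>i\<in>A. fact (f i)) dvd (fact (\<Sum>i\<in>A. f i) :: nat)"
  using assms
proof (induction A rule: finite_induct)
  case (insert a F)
  let ?s = "sum f F"
  have "fact (f a) * fact ?s dvd (fact (f a + ?s) :: nat)"
    using binomial_fact_lemma[of "f a" "f a + ?s"] by (metis add_diff_cancel_left' dvd_triv_left le_add1)
  moreover have "fact (f a) * (\<Prod>i\<in>F. fact (f i)) dvd (fact (f a) * fact ?s :: nat)"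
    using insert by (simp add: mult_dvd_mono)
  ultimately show ?case using insert by (auto intro: dvd_trans)
qed simp

(* Kummer's criterion for p = 2 (one direction): an odd multinomial coefficient
   comes from a sum without carries. Both sides are compared via Legendre's formula. *)
lemma odd_multinomial_no_carries:
  assumes "finite A" and "odd (fact (\<Sum>i\<in>A. f i) div (\<Prod>i\<in>A. fact (f i)) :: nat)"
  shows "popcount (\<Sum>i\<in>A. f i) = (\<Sum>i\<in>A. popcount (f i))"
proof -
  let ?t = "\<Sum>i\<in>A. f i" and ?D = "(\<Prod>i\<in>A. fact (f i)) :: nat"
  let ?M = "fact ?t div ?D"
  have split: "fact ?t = ?M * ?D" using prod_fact_dvd_fact_sum[OF assms(1), of f] by simp
  have "?M \<noteq> 0" using assms(2) by (metis even_zero)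
  then have "multiplicity (2::nat) (fact ?t) = multiplicity 2 ?M + multiplicity 2 ?D"
    using assms(1) by (subst split, intro prime_elem_multiplicity_mult_distrib) auto
  also have "multiplicity (2::nat) ?M = 0"
    using assms(2) by (intro not_dvd_imp_multiplicity_0) simp
  also have "multiplicity (2::nat) ?D = (\<Sum>i\<in>A. multiplicity 2 (fact (f i) :: nat))"
    using assms(1) by (intro prime_elem_multiplicity_prod_distrib) auto
  finally have "multiplicity (2::nat) (fact ?t) = (\<Sum>i\<in>A. multiplicity 2 (fact (f i) :: nat))"
    by simp
  moreover have "?t = (\<Sum>i\<in>A. multiplicity 2 (fact (f i) :: nat)) + (\<Sum>i\<in>A. popcount (f i))"
    by (simp add: legendre_two sum.distrib[symmetric])
  ultimately show ?thesis using legendre_two[of ?t] by linarith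
qed

lemma sum_lessThan_split_zero:
  "1 \<le> (N::nat) \<Longrightarrow> (\<Sum>i<N. g i) = g 0 + (\<Sum>i\<in>{1..<N}. g i)"
proof -
  assume "1 \<le> N"
  then have "{..<N} = insert 0 {1..<N}" by auto
  then show ?thesis by simp
qed

lemma sum_over_support:
  fixes F :: "nat \<Rightarrow> nat" and g :: "nat \<Rightarrow> 'a::comm_monoid_add"
  assumes "\<And>i. N \<le> i \<Longrightarrow> F i = 0" and "\<And>i. F i = 0 \<Longrightarrow> g i = 0"
  shows "(\<Sum>i\<in>{i. 1 \<le> i \<and> F i \<noteq> 0}. g i) = (\<Sum>i\<in>{1..<N}. g i)"
proof (rule sum.mono_neutral_left)
  show "{i. 1 \<le> i \<and> F i \<noteq> 0} \<subseteq> {1..<N}"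
  proof
    fix i assume "i \<in> {i. 1 \<le> i \<and> F i \<noteq> 0}"
    moreover from this have "\<not> N \<le> i" using assms(1) by auto
    ultimately show "i \<in> {1..<N}" by simp
  qed
qed (use assms(2) in auto)

(* Since 2^i - 1 is odd, the Chow weight of P^R is minus the number of odd r_i. *)
lemma chow_eq_parity_count:
  "chow R = - int (\<Sum>i\<in>{i. 1 \<le> i \<and> R i \<noteq> 0}. R i mod 2)"
proof -
  let ?A = "{i. 1 \<le> i \<and> R i \<noteq> 0}"
  have "R i * (2 ^ i - 1) = 2 * ((R i * (2 ^ i - 1)) div 2) + R i mod 2" if "1 \<le> i" for i
  proof -
    have "odd ((2::nat) ^ i - 1)" using that by (simp add: odd_iff_mod_2_eq_one)
    then have "(R i * (2 ^ i - 1)) mod 2 = R i mod 2"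
      by (metis mod_mult_right_eq mult.right_neutral odd_iff_mod_2_eq_one)
    then show ?thesis by presburger
  qed
  then have "deg_p R = (\<Sum>i\<in>?A. 2 * ((R i * (2 ^ i - 1)) div 2) + R i mod 2)"
    unfolding deg_p_def by (intro sum.cong) auto
  also have "\<dots> = 2 * deg_q R + (\<Sum>i\<in>?A. R i mod 2)"
    unfolding deg_q_def by (simp add: sum.distrib sum_distrib_left)
  finally show ?thesis unfolding chow_def by simp
qed

lemma v_val_eq_popcount: "v_val R = (\<Sum>i\<in>{i. 1 \<le> i \<and> R i \<noteq> 0}. i * popcount (R i))"
  unfolding v_val_def by (simp add: sum_distrib_left[symmetric] popcount_eq_bits)

lemma sum_antidiagonals:
  fixes g :: "nat \<Rightarrow> nat \<Rightarrow> 'a::comm_monoid_add"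
  assumes "g 0 0 = 0" and "\<And>i j. N \<le> i \<or> N \<le> j \<Longrightarrow> g i j = 0"
  shows "(\<Sum>n\<in>{1..<2*N}. \<Sum>i\<le>n. g i (n - i)) = (\<Sum>i<N. \<Sum>j<N. g i j)"
proof -
  have "(\<Sum>n\<in>{1..<2*N}. \<Sum>i\<le>n. g i (n - i)) = (\<Sum>n<2*N. \<Sum>i\<le>n. g i (n - i))"
    by (rule sum.mono_neutral_left) (auto simp: assms(1) not_less_eq_eq)
  also have "\<dots> = (\<Sum>(i, j)\<in>{(i, j). i + j < 2*N}. g i j)"
    by (rule sum.triangle_reindex[symmetric])
  also have "\<dots> = (\<Sum>(i, j)\<in>{..<N} \<times> {..<N}. g i j)"
  proof (rule sum.mono_neutral_right)
    show "finite {(i, j). i + j < 2 * N}"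
      by (rule finite_subset[of _ "{..<2*N} \<times> {..<2*N}"]) auto
    show "\<forall>x\<in>{(i, j). i + j < 2 * N} - {..<N} \<times> {..<N}. (case x of (i, j) \<Rightarrow> g i j) = 0"
    proof
      fix x assume x: "x \<in> {(i, j). i + j < 2 * N} - {..<N} \<times> {..<N}"
      obtain i j where ij: "x = (i, j)" by fastforce
      with x have "N \<le> i \<or> N \<le> j" by auto
      then show "(case x of (i, j) \<Rightarrow> g i j) = 0" using assms(2) ij by simp
    qed
  qed auto
  also have "\<dots> = (\<Sum>i<N. \<Sum>j<N. g i j)"
    by (rule sum.cartesian_product[symmetric])
  finally show ?thesis .
qed

lemma odd_multinom_factor:
  assumes "b_coeff X = 1" and "finite {n. 1 \<le> n \<and> T_seq X n \<noteq> 0}"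
    and "1 \<le> n" and "T_seq X n \<noteq> 0"
  shows "odd (multinom_n X n)"
  using assms even_prod_iff[OF assms(2), of "multinom_n X"]
  unfolding b_coeff_def by (auto simp: odd_iff_mod_2_eq_one[symmetric])

lemma fin_matrix_box:
  assumes "fin_matrix X"
  obtains N where "1 \<le> N" and "\<And>i j. (i, j) \<noteq> (0, 0) \<Longrightarrow> N \<le> i \<or> N \<le> j \<Longrightarrow> X i j = 0"
proof -
  let ?F = "{(i, j). (i, j) \<noteq> (0, 0) \<and> X i j \<noteq> 0}"
  have "finite ?F" using assms unfolding fin_matrix_def .
  then have "finite ((\<lambda>(i, j). i + j) ` ?F)" by (rule finite_imageI)
  then obtain M where M: "\<forall>k\<in>(\<lambda>(i, j). i + j) ` ?F. k < M"
    unfolding finite_nat_set_iff_bounded by blast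
  show ?thesis
  proof
    show "1 \<le> max 1 M" by simp
    fix i j assume ij: "(i, j) \<noteq> (0, 0)" and "max 1 M \<le> i \<or> max 1 M \<le> j"
    then have "\<not> i + j < M" by auto
    moreover have "X i j \<noteq> 0 \<Longrightarrow> i + j \<in> (\<lambda>(i, j). i + j) ` ?F"
      using ij by (intro image_eqI[where x = "(i, j)"]) simp_all
    ultimately show "X i j = 0" using M by blast
  qed
qed

locale milnor_box =
  fixes R S :: "nat \<Rightarrow> nat" and X :: "nat \<Rightarrow> nat \<Rightarrow> nat" and N :: nat
  assumes milnor: "milnor_matrix R S X"
    and N_pos: "1 \<le> N"
    and outside_box: "\<And>i j. (i, j) \<noteq> (0, 0) \<Longrightarrow> N \<le> i \<or> N \<le> j \<Longrightarrow> X i j = 0"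
begin

lemma inside_box: "(i, j) \<noteq> (0, 0) \<Longrightarrow> X i j \<noteq> 0 \<Longrightarrow> i < N \<and> j < N"
  using outside_box[of i j] by (meson not_le)

lemma row_expansion: "1 \<le> i \<Longrightarrow> R i = (\<Sum>j<N. 2 ^ j * X i j)"
proof -
  assume i: "1 \<le> i"
  then have "R i = (\<Sum>j\<in>{j. X i j \<noteq> 0}. 2 ^ j * X i j)"
    using milnor unfolding milnor_matrix_def by simp
  also have "\<dots> = (\<Sum>j<N. 2 ^ j * X i j)"
    using i inside_box[of i] by (intro sum.mono_neutral_left) auto
  finally show ?thesis .
qed

lemma col_expansion: "1 \<le> j \<Longrightarrow> S j = (\<Sum>i<N. X i j)"
proof -
  assume j: "1 \<le> j"
  then have "S j = (\<Sum>i\<in>{i. X i j \<noteq> 0}. X i j)"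
    using milnor unfolding milnor_matrix_def by simp
  also have "\<dots> = (\<Sum>i<N. X i j)"
    using j inside_box[of _ j] by (intro sum.mono_neutral_left) auto
  finally show ?thesis .
qed

lemma T_expansion: "1 \<le> n \<Longrightarrow> T_seq X n = (\<Sum>i\<le>n. X i (n - i))"
  unfolding T_seq_def by simp

lemma R_vanishes: "N \<le> i \<Longrightarrow> R i = 0"
  using N_pos row_expansion[of i] outside_box[of i] by simp

lemma S_vanishes: "N \<le> j \<Longrightarrow> S j = 0"
  using N_pos col_expansion[of j] outside_box[of _ j] by simp

lemma T_vanishes: "2 * N \<le> n \<Longrightarrow> T_seq X n = 0"
proof -
  assume n: "2 * N \<le> n"
  have "X i (n - i) = 0" if "i \<le> n" for i
    using n N_pos that by (intro outside_box) auto
  then show ?thesis using n N_pos T_expansion[of n] by simp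
qed

lemma v_val_R: "v_val R = (\<Sum>i<N. i * popcount (R i))"
proof -
  have "v_val R = (\<Sum>i\<in>{1..<N}. i * popcount (R i))"
    unfolding v_val_eq_popcount by (rule sum_over_support[OF R_vanishes]) simp_all
  then show ?thesis by (simp add: sum_lessThan_split_zero[OF N_pos])
qed

lemma v_val_S: "v_val S = (\<Sum>j<N. j * popcount (S j))"
proof -
  have "v_val S = (\<Sum>j\<in>{1..<N}. j * popcount (S j))"
    unfolding v_val_eq_popcount by (rule sum_over_support[OF S_vanishes]) simp_all
  then show ?thesis by (simp add: sum_lessThan_split_zero[OF N_pos])
qed

lemma chow_R: "chow R = - int (\<Sum>i\<in>{1..<N}. R i mod 2)"
proof -
  have "(\<Sum>i\<in>{i. 1 \<le> i \<and> R i \<noteq> 0}. R i mod 2) = (\<Sum>i\<in>{1..<N}. R i mod 2)"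
    by (rule sum_over_support[OF R_vanishes]) simp_all
  then show ?thesis by (simp add: chow_eq_parity_count)
qed

lemma chow_S: "chow S = - int (\<Sum>j\<in>{1..<N}. S j mod 2)"
proof -
  have "(\<Sum>j\<in>{j. 1 \<le> j \<and> S j \<noteq> 0}. S j mod 2) = (\<Sum>j\<in>{1..<N}. S j mod 2)"
    by (rule sum_over_support[OF S_vanishes]) simp_all
  then show ?thesis by (simp add: chow_eq_parity_count)
qed

lemma chow_T: "chow (T_seq X) = - int (\<Sum>n\<in>{1..<2*N}. T_seq X n mod 2)"
proof -
  have "(\<Sum>n\<in>{n. 1 \<le> n \<and> T_seq X n \<noteq> 0}. T_seq X n mod 2) = (\<Sum>n\<in>{1..<2*N}. T_seq X n mod 2)"
    by (rule sum_over_support[OF T_vanishes]) simp_all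
  then show ?thesis by (simp add: chow_eq_parity_count)
qed

lemma popcount_R_le: "1 \<le> i \<Longrightarrow> popcount (R i) \<le> (\<Sum>j<N. popcount (X i j))"
  using row_expansion[of i] popcount_sum_le[of "\<lambda>j. 2 ^ j * X i j" "{..<N}"] by simp

lemma popcount_S_le: "1 \<le> j \<Longrightarrow> popcount (S j) \<le> (\<Sum>i<N. popcount (X i j))"
  using col_expansion[of j] popcount_sum_le[of "\<lambda>i. X i j" "{..<N}"] by simp

(* From now on b(X) = 1: no antidiagonal sum t_n has a carry. *)
context
  assumes b_odd: "b_coeff X = 1"
begin

lemma popcount_T: "1 \<le> n \<Longrightarrow> popcount (T_seq X n) = (\<Sum>i\<le>n. popcount (X i (n - i)))"
proof (cases "T_seq X n = 0")
  case True
  moreover assume "1 \<le> n"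
  ultimately show ?thesis using T_expansion[of n] by simp
next
  case False
  assume n: "1 \<le> n"
  have "{n. 1 \<le> n \<and> T_seq X n \<noteq> 0} \<subseteq> {..<2*N}"
  proof
    fix m assume "m \<in> {n. 1 \<le> n \<and> T_seq X n \<noteq> 0}"
    then show "m \<in> {..<2*N}" using T_vanishes[of m] by (cases "2 * N \<le> m") auto
  qed
  then have "finite {n. 1 \<le> n \<and> T_seq X n \<noteq> 0}" by (rule finite_subset) simp
  then have "odd (multinom_n X n)" by (rule odd_multinom_factor[OF b_odd _ n False])
  then show ?thesis
    unfolding multinom_n_def T_expansion[OF n] by (rule odd_multinomial_no_carries[rotated]) simp
qed

lemma T_parity: "1 \<le> n \<Longrightarrow> T_seq X n mod 2 = (\<Sum>i\<le>n. X i (n - i) mod 2)"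
  using no_carry_parity[of "{..n}" "\<lambda>i. X i (n - i)"] popcount_T[of n] T_expansion[of n] by simp

(* With b(X) = 1, v(T(X)) equals the sum of (i + j) * popcount x_ij, i.e. the sum of the
   two upper bounds for v(R) and v(S). *)
lemma v_val_T:
  "v_val (T_seq X) = (\<Sum>i<N. i * (\<Sum>j<N. popcount (X i j))) + (\<Sum>j<N. j * (\<Sum>i<N. popcount (X i j)))"
proof -
  have "v_val (T_seq X) = (\<Sum>n\<in>{1..<2*N}. n * popcount (T_seq X n))"
    unfolding v_val_eq_popcount by (rule sum_over_support[OF T_vanishes]) simp_all
  also have "\<dots> = (\<Sum>n\<in>{1..<2*N}. \<Sum>i\<le>n. (i + (n - i)) * popcount (X i (n - i)))"
    by (intro sum.cong refl) (simp add: popcount_T sum_distrib_left)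
  also have "\<dots> = (\<Sum>i<N. \<Sum>j<N. (i + j) * popcount (X i j))"
  proof (rule sum_antidiagonals)
    fix i j assume "N \<le> i \<or> N \<le> j"
    then show "(i + j) * popcount (X i j) = 0"
      using outside_box[of i j] by (cases "(i, j) = (0, 0)") auto
  qed simp
  also have "\<dots> = (\<Sum>i<N. \<Sum>j<N. i * popcount (X i j)) + (\<Sum>j<N. \<Sum>i<N. j * popcount (X i j))"
    by (simp add: sum.distrib algebra_simps sum.swap[of "\<lambda>i j. j * popcount (X i j)"])
  finally show ?thesis by (simp add: sum_distrib_left)
qed

(* If moreover v(T(X)) = v(R) + v(S), both bounds are attained termwise,
   so no row and no column sum has a carry either. *)
context
  assumes v_additive: "v_val (T_seq X) = v_val R + v_val S"
begin

lemma weighted_row_col_sums_tight: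
  "(\<Sum>i<N. i * popcount (R i)) = (\<Sum>i<N. i * (\<Sum>j<N. popcount (X i j)))"
  "(\<Sum>j<N. j * popcount (S j)) = (\<Sum>j<N. j * (\<Sum>i<N. popcount (X i j)))"
proof -
  have "(\<Sum>i<N. i * popcount (R i)) \<le> (\<Sum>i<N. i * (\<Sum>j<N. popcount (X i j)))"
    using popcount_R_le by (intro sum_mono) (simp add: Suc_le_eq)
  moreover have "(\<Sum>j<N. j * popcount (S j)) \<le> (\<Sum>j<N. j * (\<Sum>i<N. popcount (X i j)))"
    using popcount_S_le by (intro sum_mono) (simp add: Suc_le_eq)
  ultimately show "(\<Sum>i<N. i * popcount (R i)) = (\<Sum>i<N. i * (\<Sum>j<N. popcount (X i j)))"
    "(\<Sum>j<N. j * popcount (S j)) = (\<Sum>j<N. j * (\<Sum>i<N. popcount (X i j)))"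
    using v_additive v_val_T v_val_R v_val_S by linarith+
qed

lemma row_no_carries: "i \<in> {1..<N} \<Longrightarrow> popcount (R i) = (\<Sum>j<N. popcount (X i j))"
  using sum_mono_inv[OF weighted_row_col_sums_tight(1), of i] popcount_R_le
  by (simp add: Suc_le_eq)

lemma col_no_carries: "j \<in> {1..<N} \<Longrightarrow> popcount (S j) = (\<Sum>i<N. popcount (X i j))"
  using sum_mono_inv[OF weighted_row_col_sums_tight(2), of j] popcount_S_le
  by (simp add: Suc_le_eq)

lemma R_parity: "i \<in> {1..<N} \<Longrightarrow> R i mod 2 = X i 0 mod 2"
proof -
  assume i: "i \<in> {1..<N}"
  then have "R i = (\<Sum>j<N. 2 ^ j * X i j)" by (simp add: row_expansion)
  then have "R i mod 2 = (\<Sum>j<N. 2 ^ j * X i j mod 2)"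
    using row_no_carries[OF i] by (simp add: no_carry_parity)
  also have "\<dots> = X i 0 mod 2 + (\<Sum>j\<in>{1..<N}. 2 ^ j * X i j mod 2)"
    by (simp add: sum_lessThan_split_zero[OF N_pos])
  also have "(\<Sum>j\<in>{1..<N}. 2 ^ j * X i j mod 2) = 0"
    by (intro sum.neutral) auto
  finally show ?thesis by simp
qed

lemma S_parity: "j \<in> {1..<N} \<Longrightarrow> S j mod 2 = (\<Sum>i<N. X i j mod 2)"
  using col_no_carries[of j] col_expansion[of j] by (simp add: no_carry_parity)

(* Counting odd entries of X by antidiagonals and by rows/columns shows
   C(P^T) = C(P^R) + C(P^S), i.e. u(X) = 0. *)
lemma u_exp_vanishes: "u_exp R S X = 0"
proof -
  define q where "q i j = (if (i, j) = (0, 0) then 0 else X i j mod 2)" for i j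
  have "(\<Sum>n\<in>{1..<2*N}. T_seq X n mod 2) = (\<Sum>n\<in>{1..<2*N}. \<Sum>i\<le>n. q i (n - i))"
    by (intro sum.cong refl) (auto simp: T_parity q_def intro!: sum.cong)
  also have "\<dots> = (\<Sum>i<N. \<Sum>j<N. q i j)"
  proof (rule sum_antidiagonals)
    fix i j assume "N \<le> i \<or> N \<le> j"
    then show "q i j = 0" using outside_box[of i j] by (simp add: q_def)
  qed (simp add: q_def)
  also have "\<dots> = (\<Sum>j<N. \<Sum>i<N. q i j)"
    by (rule sum.swap)
  also have "\<dots> = (\<Sum>i\<in>{1..<N}. X i 0 mod 2) + (\<Sum>j\<in>{1..<N}. \<Sum>i<N. X i j mod 2)"
    by (simp add: sum_lessThan_split_zero[OF N_pos] q_def)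
  finally have "(\<Sum>n\<in>{1..<2*N}. T_seq X n mod 2)
      = (\<Sum>i\<in>{1..<N}. R i mod 2) + (\<Sum>j\<in>{1..<N}. S j mod 2)"
    by (simp add: R_parity S_parity)
  then show ?thesis
    unfolding u_exp_def chow_R chow_S chow_T by simp
qed

end

end

end

(* The main theorem: choose a box supporting X and apply the locale. *)
theorem mainTheorem7:
  fixes R S :: "nat \<Rightarrow> nat" and X :: "nat \<Rightarrow> nat \<Rightarrow> nat"
  assumes "fin_seq R" and "fin_seq S"
    and "milnor_matrix R S X"
    and "b_coeff X = 1"
    and "v_val (T_seq X) = v_val R + v_val S"
  shows "u_exp R S X = 0"
proof -
  have "fin_matrix X" using assms(3) unfolding milnor_matrix_def by simp
  then obtain N where "1 \<le> N"
    and "\<And>i j. (i, j) \<noteq> (0, 0) \<Longrightarrow> N \<le> i \<or> N \<le> j \<Longrightarrow> X i j = 0"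
    using fin_matrix_box by blast
  then interpret milnor_box R S X N
    using assms(3) by unfold_locales
  show ?thesis using assms(4,5) by (rule u_exp_vanishes)
qed

end
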